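(* Let $d \geq 2$ and let $X$ be a $d$-dimensional simplicial complex on $n$ vertices with $\Delta(X) \leq K - 1$ for some integer $K \geq 5$. Then there exists a proper coloring $c$ of $V(X)$ using at most $18K^8 d^6 \lceil n^{1/d} \rceil$ colors such that no two $(d-1)$-dimensional faces of $X$ receive the same pattern under $c$.
   Context: For a finite simplicial complex $X$, $\mathrm{skel}_k(X)$ is the set of $k$-dimensional faces, $\Delta_{i,j}(X) = \max_{\sigma \in \mathrm{skel}_i(X)} |\{\tau \in \mathrm{skel}_j(X) : \sigma \subseteq \tau\}|$, and $\Delta(X) = \max_{i,j}\Delta_{i,j}(X)$. A coloring of $V(X)$ is proper if no two vertices joined by an edge receive the same color. The pattern of a face under a coloring is the multiset of colors of its vertices. *)

theory Defs
  imports Complex_Main "HOL-Library.Multiset"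
begin

definition simplicial_complex :: "'a set set \<Rightarrow> bool" where
  "simplicial_complex X \<longleftrightarrow> finite X \<and> (\<forall>\<sigma>\<in>X. finite \<sigma> \<and> \<sigma> \<noteq> {}) \<and>
     (\<forall>\<sigma>\<in>X. \<forall>\<tau>. \<tau> \<subseteq> \<sigma> \<and> \<tau> \<noteq> {} \<longrightarrow> \<tau> \<in> X)"

definition vertices :: "'a set set \<Rightarrow> 'a set" where
  "vertices X = \<Union>X"

text \<open>Dimension of a face is its cardinality minus one.\<close>
definition skel :: "nat \<Rightarrow> 'a set set \<Rightarrow> 'a set set" where
  "skel k X = {\<sigma>\<in>X. card \<sigma> = k + 1}"

definition cx_dim :: "'a set set \<Rightarrow> nat \<Rightarrow> bool" where
  "cx_dim X d \<longleftrightarrow> skel d X \<noteq> {} \<and> (\<forall>\<sigma>\<in>X. card \<sigma> \<le> d + 1)"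

definition Delta_ij :: "'a set set \<Rightarrow> nat \<Rightarrow> nat \<Rightarrow> nat" where
  "Delta_ij X i j = Max (insert 0 ((\<lambda>\<sigma>. card {\<tau>\<in>skel j X. \<sigma> \<subseteq> \<tau>}) ` skel i X))"

text \<open>Maximum over all i, j; only i, j up to the maximum face size matter
  (other skeleta are empty).\<close>
definition Delta :: "'a set set \<Rightarrow> nat" where
  "Delta X = Max {Delta_ij X i j | i j. i \<le> Max (insert 0 (card ` X)) \<and> j \<le> Max (insert 0 (card ` X))}"

definition proper_coloring :: "'a set set \<Rightarrow> ('a \<Rightarrow> 'c) \<Rightarrow> bool" where
  "proper_coloring X c \<longleftrightarrow> (\<forall>u\<in>vertices X. \<forall>v\<in>vertices X. u \<noteq> v \<and> {u, v} \<in> X \<longrightarrow> c u \<noteq> c v)"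

definition pattern :: "('a \<Rightarrow> 'c) \<Rightarrow> 'a set \<Rightarrow> 'c multiset" where
  "pattern c \<sigma> = image_mset c (mset_set \<sigma>)"

end

theory Submission
  imports Defs
begin

text \<open>The vertices are colored greedily, one at a time, keeping two invariants: distinct
  vertices at distance at most two get distinct colors (so the coloring is proper, is injective
  on every face, and the pattern of a face is just its color set), and for every \<open>s \<le> d\<close> and
  every color set \<open>S\<close> at most \<open>r ^ (d - s)\<close> of the colored faces with \<open>s\<close> vertices have color
  set \<open>S\<close>, where \<open>r = \<lceil>n powr (1 / d)\<rceil>\<close>. For \<open>s = d\<close> the second invariant says that
  distinct \<open>(d - 1)\<close>-faces have distinct patterns.

  When a vertex \<open>v\<close> gets color \<open>x\<close>, the new faces through \<open>v\<close> with a given color set are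
  at most one, because the colors around \<open>v\<close> are distinct. So the invariant can only break at
  color sets that are already saturated. Double counting against the cofaces of the faces
  through \<open>v\<close> shows that only \<open>O(d D\<^sup>2 r)\<close> colors \<open>x\<close> lead to a saturated color set, where
  \<open>D\<close> bounds the number of cofaces; together with the \<open>O(D\<^sup>2)\<close> colors at distance two this
  leaves a free color in a palette of size \<open>O(d D\<^sup>2 r)\<close>.\<close>

lemma card_threshold_mult_le:
  fixes A :: "'i \<Rightarrow> 'b set"
  assumes "finite I" "finite B" "\<And>x. x \<in> I \<Longrightarrow> A x \<subseteq> B"
    and "\<And>x y. x \<in> I \<Longrightarrow> y \<in> I \<Longrightarrow> x \<noteq> y \<Longrightarrow> A x \<inter> A y = {}"
  shows "card {x\<in>I. p \<le> card (A x)} * p \<le> card B"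
proof -
  let ?J = "{x\<in>I. p \<le> card (A x)}"
  have "card ?J * p = (\<Sum>x\<in>?J. p)" by simp
  also have "\<dots> \<le> (\<Sum>x\<in>?J. card (A x))" by (rule sum_mono) simp
  also have "\<dots> = card (\<Union>x\<in>?J. A x)"
  proof (rule card_UN_disjoint[symmetric])
    show "finite ?J" using assms(1) by simp
    show "\<forall>x\<in>?J. finite (A x)" by (auto intro: finite_subset[OF assms(3) assms(2)])
    show "\<forall>x\<in>?J. \<forall>y\<in>?J. x \<noteq> y \<longrightarrow> A x \<inter> A y = {}" using assms(4) by auto
  qed
  also have "\<dots> \<le> card B" using assms(2,3) by (intro card_mono) auto
  finally show ?thesis .
qed

lemma le_ceiling_root_power:
  assumes "1 \<le> n" "1 \<le> d"
  shows "n \<le> nat \<lceil>real n powr (1 / real d)\<rceil> ^ d" and "1 \<le> nat \<lceil>real n powr (1 / real d)\<rceil>"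
proof -
  define y where "y = real n powr (1 / real d)"
  have y_pos: "0 < y" using assms unfolding y_def by simp
  then show "1 \<le> nat \<lceil>y\<rceil>" by linarith
  have "real n = y ^ d"
    using assms y_pos unfolding y_def by (simp add: powr_realpow[symmetric] powr_powr)
  also have "\<dots> \<le> real (nat \<lceil>y\<rceil> ^ d)"
    using y_pos by (simp add: power_mono)
  finally show "n \<le> nat \<lceil>y\<rceil> ^ d" by linarith
qed

locale finite_simplicial_complex =
  fixes X :: "'a set set"
  assumes complex: "simplicial_complex X"
begin

lemma finite_complex: "finite X"
  and finite_face: "\<sigma> \<in> X \<Longrightarrow> finite \<sigma>"
  and face_nonempty: "\<sigma> \<in> X \<Longrightarrow> \<sigma> \<noteq> {}"
  and subface: "\<sigma> \<in> X \<Longrightarrow> \<tau> \<subseteq> \<sigma> \<Longrightarrow> \<tau> \<noteq> {} \<Longrightarrow> \<tau> \<in> X"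
  using complex unfolding simplicial_complex_def by blast+

lemma finite_vertices: "finite (vertices X)"
  unfolding vertices_def using finite_complex finite_face by auto

lemma face_subset_vertices: "\<sigma> \<in> X \<Longrightarrow> \<sigma> \<subseteq> vertices X"
  unfolding vertices_def by auto

lemma singleton_face: "v \<in> vertices X \<Longrightarrow> {v} \<in> X"
  unfolding vertices_def using subface by blast

lemma edge_face: "\<sigma> \<in> X \<Longrightarrow> u \<in> \<sigma> \<Longrightarrow> w \<in> \<sigma> \<Longrightarrow> {u, w} \<in> X"
  by (rule subface) auto

lemma card_face_pos: "\<sigma> \<in> X \<Longrightarrow> 0 < card \<sigma>"
  using finite_face face_nonempty by (simp add: card_gt_0_iff)

lemma card_vertices_ge: "cx_dim X d \<Longrightarrow> d + 1 \<le> card (vertices X)"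
  unfolding cx_dim_def skel_def
  using card_mono[OF finite_vertices face_subset_vertices] by fastforce

lemma card_cofaces_le_Delta:
  assumes "cx_dim X d" "\<rho> \<in> X"
  shows "card {\<sigma>\<in>X. card \<sigma> = s \<and> \<rho> \<subseteq> \<sigma>} \<le> Delta X"
proof (cases "1 \<le> s \<and> s \<le> d + 1")
  case False
  then have "{\<sigma>\<in>X. card \<sigma> = s \<and> \<rho> \<subseteq> \<sigma>} = {}"
    using assms(1) card_face_pos unfolding cx_dim_def by fastforce
  then show ?thesis by (metis card.empty le0)
next
  case True
  define M where "M = Max (insert 0 (card ` X))"
  obtain \<sigma> where "\<sigma> \<in> X" "card \<sigma> = d + 1"
    using assms(1) unfolding cx_dim_def skel_def by auto
  then have "d + 1 \<in> card ` X" by (metis image_eqI)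
  then have M: "M = d + 1"
    using finite_complex assms(1) unfolding M_def cx_dim_def
    by (intro antisym) (auto simp: Max_le_iff intro!: Max_ge)
  define i where "i = card \<rho> - 1"
  have \<rho>_skel: "\<rho> \<in> skel i X" and i_le: "i \<le> M"
    using card_face_pos[OF assms(2)] assms M unfolding i_def skel_def cx_dim_def by auto
  have "card {\<sigma>\<in>X. card \<sigma> = s \<and> \<rho> \<subseteq> \<sigma>} = card {\<tau>\<in>skel (s - 1) X. \<rho> \<subseteq> \<tau>}"
    using True unfolding skel_def by (simp add: conj_ac)
  also have "\<dots> \<le> Delta_ij X i (s - 1)"
    unfolding Delta_ij_def using finite_complex \<rho>_skel by (intro Max_ge) (auto simp: skel_def)
  also have "\<dots> \<le> Delta X"
  proof -
    have "{Delta_ij X i j |i j. i \<le> M \<and> j \<le> M} \<subseteq> (\<lambda>(i, j). Delta_ij X i j) ` ({..M} \<times> {..M})"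
      by auto
    moreover have "s - 1 \<le> M" using True M by arith
    ultimately show ?thesis
      unfolding Delta_def M_def[symmetric] using i_le
      by (intro Max_ge) (blast intro: finite_subset)+
  qed
  finally show ?thesis .
qed

end

locale greedy_coloring = finite_simplicial_complex X for X :: "'a set set" +
  fixes D d r :: nat
  assumes card_cofaces_le: "\<And>\<rho> s. \<rho> \<in> X \<Longrightarrow> card {\<sigma>\<in>X. card \<sigma> = s \<and> \<rho> \<subseteq> \<sigma>} \<le> D"
    and r_pos: "1 \<le> r" and d_pos: "1 \<le> d"
    and card_vertices_le: "card (vertices X) \<le> r ^ d"
begin

definition closed_nbhd :: "'a \<Rightarrow> 'a set" where
  "closed_nbhd z = {w. {z, w} \<in> X}"

definition ball2 :: "'a \<Rightarrow> 'a set" where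
  "ball2 v = (\<Union>z\<in>closed_nbhd v. closed_nbhd z)"

definition distance2_coloring :: "'a set \<Rightarrow> ('a \<Rightarrow> nat) \<Rightarrow> bool" where
  "distance2_coloring W c \<longleftrightarrow> (\<forall>u\<in>W. \<forall>w\<in>W. u \<noteq> w \<and> w \<in> ball2 u \<longrightarrow> c u \<noteq> c w)"

definition colored_faces :: "'a set \<Rightarrow> ('a \<Rightarrow> nat) \<Rightarrow> nat \<Rightarrow> nat set \<Rightarrow> 'a set set" where
  "colored_faces W c s S = {\<sigma>\<in>X. card \<sigma> = s \<and> \<sigma> \<subseteq> W \<and> c ` \<sigma> = S}"

text \<open>One more color than the forbidden ones: \<open>(D + 1)\<^sup>2\<close> at distance two, \<open>r\<close> heavy ones and
  \<open>d D\<^sup>2 r\<close> saturating ones.\<close>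

definition palette_size :: nat where
  "palette_size = (D + 1) * (D + 1) + r + d * (D * D * r) + 1"

definition admissible :: "'a set \<Rightarrow> ('a \<Rightarrow> nat) \<Rightarrow> bool" where
  "admissible W c \<longleftrightarrow> c ` W \<subseteq> {..<palette_size} \<and> distance2_coloring W c \<and>
     (\<forall>s\<in>{1..d}. \<forall>S. card (colored_faces W c s S) \<le> r ^ (d - s))"

lemma palette_size_le: "palette_size \<le> 18 * (D + 1) ^ 8 * d ^ 6 * r"
proof -
  define k where "k = D + 1"
  have "palette_size \<le> 4 * (d * (k * k * r))"
  proof -
    have "D * D \<le> k * k" "1 \<le> k * k" unfolding k_def by (simp_all add: mult_le_mono)
    then have "d * (D * D * r) \<le> d * (k * k * r)" "r \<le> k * k * r" "k * k \<le> k * k * r"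
      "k * k * r \<le> d * (k * k * r)"
      using d_pos r_pos by simp_all
    then show ?thesis unfolding palette_size_def k_def[symmetric] using r_pos by linarith
  qed
  also have "\<dots> \<le> 18 * (k ^ 8 * d ^ 6) * r"
  proof -
    have "k * k \<le> k ^ 8" "d \<le> d ^ 6"
      using d_pos power_increasing[of 2 8 k] power_increasing[of 1 6 d]
      by (simp_all add: k_def power2_eq_square)
    then have "k * k * d \<le> k ^ 8 * d ^ 6" by (rule mult_le_mono)
    then show ?thesis by (simp add: algebra_simps)
  qed
  finally show ?thesis by (simp add: k_def algebra_simps)
qed

lemma finite_colored_faces: "finite (colored_faces W c s S)"
  unfolding colored_faces_def using finite_complex by simp

lemma closed_nbhd_sym: "w \<in> closed_nbhd z \<longleftrightarrow> z \<in> closed_nbhd w"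
  unfolding closed_nbhd_def by (simp add: insert_commute)

lemma finite_closed_nbhd: "finite (closed_nbhd z)"
  using finite_vertices unfolding closed_nbhd_def vertices_def by (auto intro: finite_subset)

lemma card_closed_nbhd_le: "card (closed_nbhd z) \<le> D + 1"
proof (cases "closed_nbhd z = {}")
  case False
  then obtain w where "{z, w} \<in> X" by (auto simp: closed_nbhd_def)
  then have "{z} \<in> X" by (rule subface) auto
  have "card (closed_nbhd z - {z}) = card ((\<lambda>w. {z, w}) ` (closed_nbhd z - {z}))"
    by (rule card_image[symmetric]) (auto simp: inj_on_def doubleton_eq_iff)
  also have "\<dots> \<le> card {\<sigma>\<in>X. card \<sigma> = 2 \<and> {z} \<subseteq> \<sigma>}"
    using finite_complex by (intro card_mono) (auto simp: closed_nbhd_def)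
  also have "\<dots> \<le> D" by (rule card_cofaces_le) fact
  finally show ?thesis
    using finite_closed_nbhd card_Diff1_le[of "closed_nbhd z" z] card_Suc_Diff1[of "closed_nbhd z" z]
    by (cases "z \<in> closed_nbhd z") auto
qed simp

lemma closed_nbhd_subset_ball2: "v \<in> vertices X \<Longrightarrow> closed_nbhd v \<subseteq> ball2 v"
proof -
  assume "v \<in> vertices X"
  then have "v \<in> closed_nbhd v" using singleton_face by (simp add: closed_nbhd_def)
  then show ?thesis unfolding ball2_def by blast
qed

lemma ball2_subset_vertices: "ball2 v \<subseteq> vertices X"
  unfolding ball2_def closed_nbhd_def vertices_def by auto

lemma card_ball2_le: "card (ball2 v) \<le> (D + 1) * (D + 1)"
proof -
  have "card (ball2 v) \<le> (\<Sum>z\<in>closed_nbhd v. card (closed_nbhd z))"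
    unfolding ball2_def by (rule card_UN_le[OF finite_closed_nbhd])
  also have "\<dots> \<le> card (closed_nbhd v) * (D + 1)"
    using sum_mono[of "closed_nbhd v" "\<lambda>z. card (closed_nbhd z)" "\<lambda>_. D + 1"] card_closed_nbhd_le by simp
  also have "\<dots> \<le> (D + 1) * (D + 1)" by (rule mult_le_mono1[OF card_closed_nbhd_le])
  finally show ?thesis .
qed

lemma face_subset_ball2: "\<sigma> \<in> X \<Longrightarrow> u \<in> \<sigma> \<Longrightarrow> w \<in> \<sigma> \<Longrightarrow> w \<in> ball2 u"
proof -
  assume "\<sigma> \<in> X" "u \<in> \<sigma>" "w \<in> \<sigma>"
  then have "u \<in> closed_nbhd u" "w \<in> closed_nbhd u"
    using edge_face[of \<sigma> u u] edge_face[of \<sigma> u w] unfolding closed_nbhd_def by auto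
  then show ?thesis unfolding ball2_def by blast
qed

lemma distance2_coloring_inj_on_face:
  "distance2_coloring W c \<Longrightarrow> \<sigma> \<in> X \<Longrightarrow> \<sigma> \<subseteq> W \<Longrightarrow> inj_on c \<sigma>"
  unfolding distance2_coloring_def inj_on_def using face_subset_ball2 by blast

lemma distance2_coloring_inj_on_closed_nbhd:
  "distance2_coloring W c \<Longrightarrow> inj_on c (closed_nbhd v \<inter> W)"
  unfolding distance2_coloring_def inj_on_def ball2_def by (blast dest: closed_nbhd_sym[THEN iffD1])

lemma distance2_coloring_proper:
  "distance2_coloring (vertices X) c \<Longrightarrow> proper_coloring X c"
  unfolding proper_coloring_def distance2_coloring_def using face_subset_ball2 by blast

lemma distance2_coloring_inj_on_pattern:
  assumes "distance2_coloring (vertices X) c"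
    and "\<And>S. card (colored_faces (vertices X) c s S) \<le> 1"
  shows "inj_on (pattern c) {\<sigma>\<in>X. card \<sigma> = s}"
proof (rule inj_onI)
  fix \<sigma> \<tau> assume faces: "\<sigma> \<in> {\<sigma>\<in>X. card \<sigma> = s}" "\<tau> \<in> {\<sigma>\<in>X. card \<sigma> = s}"
    and "pattern c \<sigma> = pattern c \<tau>"
  then have "set_mset (pattern c \<sigma>) = set_mset (pattern c \<tau>)" by simp
  then have "c ` \<sigma> = c ` \<tau>"
    using faces finite_face by (simp add: pattern_def)
  then have "\<sigma> \<in> colored_faces (vertices X) c s (c ` \<sigma>)" "\<tau> \<in> colored_faces (vertices X) c s (c ` \<sigma>)"
    using faces face_subset_vertices unfolding colored_faces_def by auto
  then show "\<sigma> = \<tau>"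
    using assms(2)[of "c ` \<sigma>"] by (auto simp: card_le_Suc0_iff_eq[OF finite_colored_faces])
qed

definition heavy_colors :: "'a set \<Rightarrow> ('a \<Rightarrow> nat) \<Rightarrow> nat set" where
  "heavy_colors W c = {x. r ^ (d - 1) \<le> card {w\<in>W. c w = x}}"

definition saturated_colors :: "'a set \<Rightarrow> ('a \<Rightarrow> nat) \<Rightarrow> nat \<Rightarrow> nat set \<Rightarrow> nat set" where
  "saturated_colors W c s T = {x. x \<notin> T \<and> r ^ (d - s) \<le> card (colored_faces W c s (insert x T))}"

definition link_faces :: "'a set \<Rightarrow> 'a \<Rightarrow> nat \<Rightarrow> 'a set set" where
  "link_faces W v k = {\<rho>\<in>X. card \<rho> = k \<and> \<rho> \<subseteq> W \<and> insert v \<rho> \<in> X}"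

definition forbidden_colors :: "'a set \<Rightarrow> ('a \<Rightarrow> nat) \<Rightarrow> 'a \<Rightarrow> nat set" where
  "forbidden_colors W c v = c ` (ball2 v \<inter> W) \<union> heavy_colors W c \<union>
     (\<Union>s\<in>{2..d}. \<Union>\<rho>\<in>link_faces W v (s - 1). saturated_colors W c s (c ` \<rho>))"

lemma heavy_colors_subset: "heavy_colors W c \<subseteq> c ` W"
proof
  fix x assume "x \<in> heavy_colors W c"
  then have "card {w\<in>W. c w = x} \<noteq> 0"
    using one_le_power[OF r_pos, of "d - 1"] unfolding heavy_colors_def by auto
  then obtain w where "w \<in> W" "c w = x" by (metis (mono_tags, lifting) card.empty empty_Collect_eq)
  then show "x \<in> c ` W" by blast
qed

lemma saturated_colors_subset: "saturated_colors W c s T \<subseteq> c ` W"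
proof
  fix x assume "x \<in> saturated_colors W c s T"
  then have "card (colored_faces W c s (insert x T)) \<noteq> 0"
    using one_le_power[OF r_pos, of "d - s"] unfolding saturated_colors_def by auto
  then obtain \<sigma> where "\<sigma> \<subseteq> W" "c ` \<sigma> = insert x T"
    unfolding colored_faces_def by (metis (mono_tags, lifting) card.empty empty_Collect_eq)
  then show "x \<in> c ` W" by blast
qed

lemma card_heavy_colors_le:
  assumes "finite W" "W \<subseteq> vertices X"
  shows "card (heavy_colors W c) \<le> r"
proof -
  have "heavy_colors W c = {x\<in>c ` W. r ^ (d - 1) \<le> card {w\<in>W. c w = x}}"
    using heavy_colors_subset unfolding heavy_colors_def by blast
  then have "card (heavy_colors W c) * r ^ (d - 1) \<le> card W"
    using assms by (auto intro!: card_threshold_mult_le)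
  also have "\<dots> \<le> r ^ d"
    using card_mono[OF finite_vertices assms(2)] card_vertices_le by linarith
  also have "\<dots> = r * r ^ (d - 1)"
    using d_pos by (simp flip: power_Suc)
  finally show ?thesis using r_pos by simp
qed

text \<open>The witness is the face formed by the vertices with colors in \<open>T\<close>.\<close>

lemma colored_faces_insert_subset:
  assumes "distance2_coloring W c" "2 \<le> s" "x \<notin> T"
  shows "colored_faces W c s (insert x T) \<subseteq>
    (\<Union>\<rho>\<in>colored_faces W c (s - 1) T. {\<sigma>\<in>X. card \<sigma> = s \<and> \<rho> \<subseteq> \<sigma>})"
proof
  fix \<sigma> assume "\<sigma> \<in> colored_faces W c s (insert x T)"
  then have \<sigma>: "\<sigma> \<in> X" "card \<sigma> = s" "\<sigma> \<subseteq> W" "c ` \<sigma> = insert x T"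
    unfolding colored_faces_def by auto
  define \<rho> where "\<rho> = {w\<in>\<sigma>. c w \<in> T}"
  have inj: "inj_on c \<sigma>" by (rule distance2_coloring_inj_on_face[OF assms(1) \<sigma>(1,3)])
  have "\<rho> \<subseteq> \<sigma>" "c ` \<rho> = T" unfolding \<rho>_def using \<sigma>(4) by auto
  moreover have "card \<rho> = s - 1"
  proof -
    have "finite T" using finite_face[OF \<sigma>(1)] \<sigma>(4) by (metis finite_imageI finite_insert)
    then have "Suc (card T) = s"
      using card_image[OF inj] \<sigma>(2,4) assms(3) by simp
    moreover have "card \<rho> = card T"
      using card_image[OF inj_on_subset[OF inj \<open>\<rho> \<subseteq> \<sigma>\<close>]] \<open>c ` \<rho> = T\<close> by simp
    ultimately show ?thesis by simp
  qed
  moreover from this have "\<rho> \<in> X"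
    using assms(2) \<open>\<rho> \<subseteq> \<sigma>\<close> by (intro subface[OF \<sigma>(1)]) auto
  ultimately show "\<sigma> \<in> (\<Union>\<rho>\<in>colored_faces W c (s - 1) T. {\<sigma>\<in>X. card \<sigma> = s \<and> \<rho> \<subseteq> \<sigma>})"
    using \<sigma> unfolding colored_faces_def by blast
qed

lemma card_saturated_colors_le:
  assumes "distance2_coloring W c" "finite W" "2 \<le> s" "s \<le> d"
    and "card (colored_faces W c (s - 1) T) \<le> r ^ (d - (s - 1))"
  shows "card (saturated_colors W c s T) \<le> D * r"
proof -
  let ?cofaces = "\<Union>\<rho>\<in>colored_faces W c (s - 1) T. {\<sigma>\<in>X. card \<sigma> = s \<and> \<rho> \<subseteq> \<sigma>}"
  have "saturated_colors W c s T =
      {x\<in>c ` W - T. r ^ (d - s) \<le> card (colored_faces W c s (insert x T))}"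
    using saturated_colors_subset unfolding saturated_colors_def by blast
  moreover have "card {x\<in>c ` W - T. r ^ (d - s) \<le> card (colored_faces W c s (insert x T))}
      * r ^ (d - s) \<le> card ?cofaces"
  proof (rule card_threshold_mult_le)
    show "finite (c ` W - T)" using assms(2) by simp
    show "finite ?cofaces" by (rule rev_finite_subset[OF finite_complex]) auto
    show "colored_faces W c s (insert x T) \<subseteq> ?cofaces" if "x \<in> c ` W - T" for x
      using colored_faces_insert_subset[OF assms(1,3)] that by blast
    show "colored_faces W c s (insert x T) \<inter> colored_faces W c s (insert y T) = {}"
      if "x \<in> c ` W - T" "y \<in> c ` W - T" "x \<noteq> y" for x y
      using that unfolding colored_faces_def by (auto simp: insert_eq_iff)
  qed
  ultimately have "card (saturated_colors W c s T) * r ^ (d - s) \<le> card ?cofaces" by simp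
  also have "\<dots> \<le> (\<Sum>\<rho>\<in>colored_faces W c (s - 1) T. card {\<sigma>\<in>X. card \<sigma> = s \<and> \<rho> \<subseteq> \<sigma>})"
    by (rule card_UN_le[OF finite_colored_faces])
  also have "\<dots> \<le> (\<Sum>\<rho>\<in>colored_faces W c (s - 1) T. D)"
    by (rule sum_mono, rule card_cofaces_le) (simp add: colored_faces_def)
  also have "\<dots> \<le> D * r ^ (d - (s - 1))" using assms(5) by simp
  also have "\<dots> = (D * r) * r ^ (d - s)"
  proof -
    have "d - (s - 1) = Suc (d - s)" using assms(3,4) by arith
    then show ?thesis by (simp only: power_Suc mult.assoc)
  qed
  finally have "card (saturated_colors W c s T) * r ^ (d - s) \<le> (D * r) * r ^ (d - s)" .
  then show ?thesis using r_pos by (subst (asm) mult_le_cancel2) simp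
qed

lemma card_link_faces_le:
  assumes "v \<notin> W" "v \<in> vertices X"
  shows "card (link_faces W v k) \<le> D"
proof -
  have v_notin: "v \<notin> \<rho>" if "\<rho> \<in> link_faces W v k" for \<rho>
    using that assms(1) unfolding link_faces_def by auto
  have "inj_on (insert v) (link_faces W v k)"
    by (rule inj_onI) (simp add: insert_ident v_notin)
  then have "card (link_faces W v k) = card (insert v ` link_faces W v k)"
    by (simp add: card_image)
  also have "\<dots> \<le> card {\<sigma>\<in>X. card \<sigma> = Suc k \<and> {v} \<subseteq> \<sigma>}"
  proof (rule card_mono)
    show "finite {\<sigma>\<in>X. card \<sigma> = Suc k \<and> {v} \<subseteq> \<sigma>}" using finite_complex by simp
    show "insert v ` link_faces W v k \<subseteq> {\<sigma>\<in>X. card \<sigma> = Suc k \<and> {v} \<subseteq> \<sigma>}"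
      using v_notin finite_face unfolding link_faces_def by auto
  qed
  also have "\<dots> \<le> D" by (rule card_cofaces_le[OF singleton_face[OF assms(2)]])
  finally show ?thesis .
qed

lemma card_saturated_link_colors_le:
  assumes "admissible W c" "finite W" "v \<notin> W" "v \<in> vertices X" "s \<in> {2..d}"
  shows "card (\<Union>\<rho>\<in>link_faces W v (s - 1). saturated_colors W c s (c ` \<rho>)) \<le> D * (D * r)"
proof -
  have "card (\<Union>\<rho>\<in>link_faces W v (s - 1). saturated_colors W c s (c ` \<rho>))
      \<le> (\<Sum>\<rho>\<in>link_faces W v (s - 1). D * r)"
  proof (rule order_trans[OF card_UN_le sum_mono])
    show "finite (link_faces W v (s - 1))"
      unfolding link_faces_def using finite_complex by simp
    fix \<rho> assume "\<rho> \<in> link_faces W v (s - 1)"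
    then have "\<rho> \<in> colored_faces W c (s - 1) (c ` \<rho>)"
      unfolding link_faces_def colored_faces_def by simp
    moreover have "s - 1 \<in> {1..d}" using assms(5) by auto
    ultimately have "card (colored_faces W c (s - 1) (c ` \<rho>)) \<le> r ^ (d - (s - 1))"
      using assms(1) unfolding admissible_def by blast
    then show "card (saturated_colors W c s (c ` \<rho>)) \<le> D * r"
      using assms(1,2,5) unfolding admissible_def by (intro card_saturated_colors_le) auto
  qed
  also have "\<dots> \<le> D * (D * r)"
    using card_link_faces_le[OF assms(3,4)] by simp
  finally show ?thesis .
qed

lemma card_forbidden_colors_less:
  assumes "admissible W c" "finite W" "W \<subseteq> vertices X" "v \<notin> W" "v \<in> vertices X"
  shows "card (forbidden_colors W c v) < palette_size"
proof -
  let ?near = "c ` (ball2 v \<inter> W)"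
  let ?saturating = "\<Union>s\<in>{2..d}. \<Union>\<rho>\<in>link_faces W v (s - 1). saturated_colors W c s (c ` \<rho>)"
  have "card ?saturating \<le> (\<Sum>s\<in>{2..d}. D * (D * r))"
    using card_saturated_link_colors_le[OF assms(1,2,4,5)]
    by (intro order_trans[OF card_UN_le sum_mono]) auto
  also have "\<dots> \<le> d * (D * D * r)" by (simp add: mult.assoc)
  finally have saturating: "card ?saturating \<le> d * (D * D * r)" .
  have "card ?near \<le> card (ball2 v \<inter> W)"
    using assms(2) by (intro card_image_le) simp
  also have "\<dots> \<le> card (ball2 v)"
    by (intro card_mono finite_subset[OF ball2_subset_vertices finite_vertices]) auto
  finally have near: "card ?near \<le> (D + 1) * (D + 1)"
    using card_ball2_le[of v] by linarith
  show ?thesis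
    using card_Un_le[of ?near "heavy_colors W c"] card_Un_le[of "?near \<union> heavy_colors W c" ?saturating]
      near card_heavy_colors_le[OF assms(2,3), of c] saturating
    unfolding forbidden_colors_def palette_size_def by linarith
qed

lemma forbidden_colors_subset: "forbidden_colors W c v \<subseteq> c ` W"
  unfolding forbidden_colors_def
  by (intro Un_least UN_least image_mono Int_lower2 heavy_colors_subset saturated_colors_subset)

lemma exists_free_color:
  assumes "admissible W c" "finite W" "W \<subseteq> vertices X" "v \<notin> W" "v \<in> vertices X"
  obtains x where "x < palette_size" "x \<notin> forbidden_colors W c v"
proof -
  have "\<not> {..<palette_size} \<subseteq> forbidden_colors W c v"
  proof
    assume "{..<palette_size} \<subseteq> forbidden_colors W c v"
    then have "card {..<palette_size} \<le> card (forbidden_colors W c v)"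
      by (rule card_mono[OF finite_subset[OF forbidden_colors_subset finite_imageI[OF assms(2)]]])
    then show False using card_forbidden_colors_less[OF assms] by simp
  qed
  then show ?thesis using that by blast
qed

context
  fixes W c v x
  assumes adm: "admissible W c" and W_vertices: "W \<subseteq> vertices X"
    and v: "v \<notin> W" "v \<in> vertices X" and free: "x \<notin> forbidden_colors W c v"
begin

lemma distance2_coloring_extend: "distance2_coloring (insert v W) (c(v := x))"
proof -
  have "c w \<noteq> x" if "w \<in> W" "w \<in> ball2 v" for w
    using that free unfolding forbidden_colors_def by auto
  moreover have "w \<in> ball2 v" if "v \<in> ball2 w" for w
    using that unfolding ball2_def by (blast dest: closed_nbhd_sym[THEN iffD1])
  ultimately show ?thesis
    using adm v(1) unfolding admissible_def distance2_coloring_def by auto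
qed

lemma new_face_image:
  assumes "\<sigma> \<in> X" "v \<in> \<sigma>" "\<sigma> \<subseteq> insert v W"
  shows "\<sigma> - {v} \<subseteq> closed_nbhd v \<inter> W" and "x \<notin> c ` (\<sigma> - {v})"
    and "(c(v := x)) ` \<sigma> = insert x (c ` (\<sigma> - {v}))"
proof -
  show sub: "\<sigma> - {v} \<subseteq> closed_nbhd v \<inter> W"
    using assms edge_face unfolding closed_nbhd_def by blast
  then show "x \<notin> c ` (\<sigma> - {v})"
    using free closed_nbhd_subset_ball2[OF v(2)] unfolding forbidden_colors_def by blast
  show "(c(v := x)) ` \<sigma> = insert x (c ` (\<sigma> - {v}))"
    using assms(2) by (auto simp: fun_upd_image)
qed

lemma card_new_colored_faces_le:
  "card {\<sigma>\<in>colored_faces (insert v W) (c(v := x)) s S. v \<in> \<sigma>} \<le> 1"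
proof -
  have "\<sigma> = \<tau>" if "\<sigma> \<in> colored_faces (insert v W) (c(v := x)) s S" "v \<in> \<sigma>"
    "\<tau> \<in> colored_faces (insert v W) (c(v := x)) s S" "v \<in> \<tau>" for \<sigma> \<tau>
  proof -
    have faces: "\<sigma> \<in> X" "\<sigma> \<subseteq> insert v W" "c(v := x) ` \<sigma> = S"
      "\<tau> \<in> X" "\<tau> \<subseteq> insert v W" "c(v := x) ` \<tau> = S"
      using that unfolding colored_faces_def by auto
    note \<sigma>_new = new_face_image[OF faces(1) that(2) faces(2)]
      and \<tau>_new = new_face_image[OF faces(4) that(4) faces(5)]
    have inj: "inj_on c (closed_nbhd v \<inter> W)"
      using adm distance2_coloring_inj_on_closed_nbhd unfolding admissible_def by blast
    have "c ` (\<sigma> - {v}) = S - {x}" "c ` (\<tau> - {v}) = S - {x}"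
      using \<sigma>_new(2,3) \<tau>_new(2,3) faces(3,6) by auto
    then have "\<sigma> - {v} = \<tau> - {v}"
      using inj_on_image_eq_iff[OF inj \<sigma>_new(1) \<tau>_new(1)] by simp
    then show ?thesis using that(2,4) by blast
  qed
  then show ?thesis
    using finite_colored_faces by (auto simp: card_le_Suc0_iff_eq)
qed

lemma card_old_colored_faces_less:
  assumes "\<sigma> \<in> colored_faces (insert v W) (c(v := x)) s S" "v \<in> \<sigma>" "s \<in> {1..d}"
  shows "card (colored_faces W c s S) < r ^ (d - s)"
proof -
  have \<sigma>: "\<sigma> \<in> X" "card \<sigma> = s" "\<sigma> \<subseteq> insert v W" "(c(v := x)) ` \<sigma> = S"
    using assms(1) unfolding colored_faces_def by auto
  note new = new_face_image[OF \<sigma>(1) assms(2) \<sigma>(3)]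
  show ?thesis
  proof (cases "s = 1")
    case True
    then have "\<sigma> = {v}" "S = {x}" using \<sigma>(2,4) assms(2) by (auto simp: card_1_singleton_iff)
    have "colored_faces W c 1 {x} = (\<lambda>w. {w}) ` {w\<in>W. c w = x}"
      using W_vertices singleton_face unfolding colored_faces_def
      by (auto simp: card_1_singleton_iff)
    then have "card (colored_faces W c 1 {x}) = card {w\<in>W. c w = x}"
      by (simp add: card_image)
    then show ?thesis
      using free \<open>S = {x}\<close> True unfolding forbidden_colors_def heavy_colors_def by simp
  next
    case False
    define \<rho> where "\<rho> = \<sigma> - {v}"
    have card_\<rho>: "card \<rho> = s - 1" unfolding \<rho>_def using \<sigma>(1,2) assms(2) finite_face by simp
    moreover have "\<rho> \<in> X"
    proof (rule subface[OF \<sigma>(1)])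
      show "\<rho> \<subseteq> \<sigma>" unfolding \<rho>_def by blast
      show "\<rho> \<noteq> {}" using card_\<rho> False assms(3) by auto
    qed
    ultimately have "\<rho> \<in> link_faces W v (s - 1)"
      using new(1) \<sigma>(1) assms(2) unfolding link_faces_def \<rho>_def by (simp add: insert_absorb)
    then have "x \<notin> saturated_colors W c s (c ` \<rho>)"
      using free False assms(3) unfolding forbidden_colors_def by auto
    then show ?thesis
      using new(2,3) \<sigma>(4) unfolding saturated_colors_def \<rho>_def by auto
  qed
qed

lemma admissible_extend:
  assumes "x < palette_size"
  shows "admissible (insert v W) (c(v := x))"
proof -
  have "card (colored_faces (insert v W) (c(v := x)) s S) \<le> r ^ (d - s)"
    if s: "s \<in> {1..d}" for s S
  proof -
    let ?new = "{\<sigma>\<in>colored_faces (insert v W) (c(v := x)) s S. v \<in> \<sigma>}"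
    have "colored_faces (insert v W) (c(v := x)) s S \<subseteq> colored_faces W c s S \<union> ?new"
      unfolding colored_faces_def by (auto simp: fun_upd_image)
    then have "card (colored_faces (insert v W) (c(v := x)) s S)
        \<le> card (colored_faces W c s S \<union> ?new)"
      using finite_colored_faces by (intro card_mono) auto
    also have "\<dots> \<le> card (colored_faces W c s S) + card ?new" by (rule card_Un_le)
    finally have "card (colored_faces (insert v W) (c(v := x)) s S)
        \<le> card (colored_faces W c s S) + card ?new" .
    moreover have "card (colored_faces W c s S) \<le> r ^ (d - s)"
      using adm s unfolding admissible_def by simp
    moreover have "card (colored_faces W c s S) < r ^ (d - s)" if "?new \<noteq> {}"
      using that card_old_colored_faces_less s by blast
    ultimately show ?thesis
      using card_new_colored_faces_le[of s S] by (cases "?new = {}") auto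
  qed
  then show ?thesis
    using adm assms distance2_coloring_extend unfolding admissible_def by auto
qed

end

lemma exists_admissible: "finite W \<Longrightarrow> W \<subseteq> vertices X \<Longrightarrow> \<exists>c. admissible W c"
proof (induction W rule: finite_induct)
  case empty
  have "colored_faces {} c s S = {}" for c s S
    using face_nonempty unfolding colored_faces_def by auto
  then have "admissible {} (\<lambda>_. 0)"
    unfolding admissible_def distance2_coloring_def by simp
  then show ?case by blast
next
  case (insert v W)
  then obtain c where c: "admissible W c" by auto
  obtain x where "x < palette_size" "x \<notin> forbidden_colors W c v"
    using exists_free_color[OF c] insert by auto
  then have "admissible (insert v W) (c(v := x))"
    using admissible_extend[OF c] insert by auto
  then show ?case by blast
qed

theorem exists_pattern_injective_coloring:
  obtains c :: "'a \<Rightarrow> nat"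
  where "card (c ` vertices X) \<le> palette_size" "proper_coloring X c"
    "inj_on (pattern c) (skel (d - 1) X)"
proof -
  obtain c where c: "admissible (vertices X) c"
    using exists_admissible[OF finite_vertices] by blast
  moreover have "d \<in> {1..d}" using d_pos by simp
  ultimately have "card (colored_faces (vertices X) c d S) \<le> r ^ (d - d)" for S
    unfolding admissible_def by blast
  moreover have "skel (d - 1) X = {\<sigma>\<in>X. card \<sigma> = d}"
    using d_pos unfolding skel_def by auto
  ultimately have "inj_on (pattern c) (skel (d - 1) X)"
    using c distance2_coloring_inj_on_pattern unfolding admissible_def by simp
  moreover have "card (c ` vertices X) \<le> palette_size"
    using c card_mono[of "{..<palette_size}"] unfolding admissible_def by fastforce
  moreover have "proper_coloring X c"
    using c distance2_coloring_proper unfolding admissible_def by blast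
  ultimately show ?thesis by (intro that)
qed

end

theorem lemma3:
  fixes X :: "'a set set" and d n :: nat and K :: int
  assumes "d \<ge> 2"
    and "simplicial_complex X"
    and "cx_dim X d"
    and "card (vertices X) = n"
    and "K \<ge> 5"
    and "int (Delta X) \<le> K - 1"
  shows "\<exists>c :: 'a \<Rightarrow> nat.
           proper_coloring X c \<and>
           real (card (c ` vertices X)) \<le>
             18 * real_of_int K ^ 8 * real d ^ 6 * real_of_int \<lceil>real n powr (1 / real d)\<rceil> \<and>
           inj_on (pattern c) (skel (d - 1) X)"
proof -
  define D where "D = nat K - 1"
  define r where "r = nat \<lceil>real n powr (1 / real d)\<rceil>"
  interpret finite_simplicial_complex X by unfold_locales fact
  have "1 \<le> n" using card_vertices_ge[OF assms(3)] assms(4) by simp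
  have "int D = K - 1" using assms(5) unfolding D_def by simp
  then have "Delta X \<le> D" using assms(6) by linarith
  interpret greedy_coloring X D d r
  proof unfold_locales
    show "card {\<sigma>\<in>X. card \<sigma> = s \<and> \<rho> \<subseteq> \<sigma>} \<le> D" if "\<rho> \<in> X" for \<rho> s
      by (rule le_trans[OF card_cofaces_le_Delta[OF assms(3) that] \<open>Delta X \<le> D\<close>])
    show "1 \<le> r" "card (vertices X) \<le> r ^ d" "1 \<le> d"
      using le_ceiling_root_power[OF \<open>1 \<le> n\<close>] assms(1,4) unfolding r_def by auto
  qed
  obtain c :: "'a \<Rightarrow> nat"
    where c: "card (c ` vertices X) \<le> palette_size" "proper_coloring X c"
    "inj_on (pattern c) (skel (d - 1) X)"
    by (rule exists_pattern_injective_coloring)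
  have "real (card (c ` vertices X)) \<le> real (18 * (D + 1) ^ 8 * d ^ 6 * r)"
    using le_trans[OF c(1) palette_size_le] by (simp only: of_nat_le_iff)
  also have "\<dots> = 18 * real (D + 1) ^ 8 * real d ^ 6 * real r" by simp
  also have "\<dots> = 18 * real_of_int K ^ 8 * real d ^ 6 * real_of_int \<lceil>real n powr (1 / real d)\<rceil>"
    using assms(5) powr_ge_zero[of "real n" "1 / real d"] unfolding D_def r_def by simp
  finally show ?thesis using c by blast
qed

end
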